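(* Let $n\ge1$, $p\in(0,1]$ and $q\in[n]$. Then $\gamma_n^*\ge\big(1-(1-p)^q\big)\gamma_{n,q}^*$.
   Context: For $q\in[n]$, $\gamma_{n,q}^*$ is the optimal value of $(LP)_{n,p,q}$: maximize $\gamma$ over $\mathbf x=(x_{t,s})_{t\in[n],s\in[t]}\ge0$ and $\gamma$ subject to $x_{t,s}\le\frac1t\big(1-p\sum_{\tau=1}^{t-1}\sum_{\sigma=1}^\tau x_{\tau,\sigma}\big)$ for all $t\in[n],s\in[t]$, and $\gamma\le\frac{p}{1-(1-p)^k}\sum_{t=1}^n\sum_{s=1}^tx_{t,s}P_{t,s,k}$ for all $k\in[q]$, where $P_{t,s,k}=\sum_{i=s}^{\min(k,n-t+s)}\binom{i-1}{s-1}\binom{n-i}{t-s}/\binom nt$ (the probability that the $t$-th of $n$ uniformly randomly ordered ranked candidates has overall rank $\le k$ given that its rank among the first $t$ is $s$). $\gamma_n^*=\gamma_{n,n}^*$ is the optimal value of the same program with $k$ ranging over all of $[n]$. *)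

theory Defs
  imports Complex_Main
begin

text \<open>P_{t,s,k}: probability that the t-th of n candidates has overall rank \<le> k
  given that its relative rank among the first t is s.\<close>
definition Pprob :: "nat \<Rightarrow> nat \<Rightarrow> nat \<Rightarrow> nat \<Rightarrow> real" where
  "Pprob n t s k =
     (\<Sum>i = s..min k (n - t + s). real ((i - 1) choose (s - 1)) * real ((n - i) choose (t - s)))
       / real (n choose t)"

text \<open>Feasibility for (LP)_{n,p,q}. The variables are x_{t,s} for t \<in> [n], s \<in> [t];
  values of x outside this index range are irrelevant.\<close>
definition LP_feasible :: "nat \<Rightarrow> real \<Rightarrow> nat \<Rightarrow> (nat \<Rightarrow> nat \<Rightarrow> real) \<Rightarrow> real \<Rightarrow> bool" where
  "LP_feasible n p q x \<gamma> \<longleftrightarrow>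
     (\<forall>t\<in>{1..n}. \<forall>s\<in>{1..t}. 0 \<le> x t s) \<and>
     (\<forall>t\<in>{1..n}. \<forall>s\<in>{1..t}.
        x t s \<le> (1 / real t) * (1 - p * (\<Sum>\<tau> = 1..t - 1. \<Sum>\<sigma> = 1..\<tau>. x \<tau> \<sigma>))) \<and>
     (\<forall>k\<in>{1..q}.
        \<gamma> \<le> p / (1 - (1 - p) ^ k) * (\<Sum>t = 1..n. \<Sum>s = 1..t. x t s * Pprob n t s k))"

definition gamma_opt :: "nat \<Rightarrow> real \<Rightarrow> nat \<Rightarrow> real" where
  "gamma_opt n p q = Sup {\<gamma>. \<exists>x. LP_feasible n p q x \<gamma>}"

end

theory Submission
  imports Defs
begin

text \<open>If \<open>(x, \<gamma>)\<close> is feasible for the first \<open>q\<close> rank constraints, then \<open>(x, c \<gamma>)\<close> with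
  \<open>c = 1 - (1 - p)^q\<close> satisfies every rank constraint. For \<open>k \<le> q\<close> this is immediate since
  \<open>c \<le> 1\<close>. For \<open>k > q\<close>, the \<open>q\<close>-th constraint gives \<open>c \<gamma> \<le> p M\<^sub>q\<close>, where \<open>M\<^sub>k\<close> is the
  weighted mass of the ranks \<open>\<le> k\<close>; as \<open>M\<^sub>k\<close> is monotone in \<open>k\<close> and \<open>1 - (1 - p)^k \<le> 1\<close>,
  this is at most \<open>p / (1 - (1 - p)^k) M\<^sub>k\<close>.\<close>

definition rank_mass :: "nat \<Rightarrow> (nat \<Rightarrow> nat \<Rightarrow> real) \<Rightarrow> nat \<Rightarrow> real" where
  "rank_mass n x k = (\<Sum>t = 1..n. \<Sum>s = 1..t. x t s * Pprob n t s k)"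

lemmas LP_feasible_rank_mass = LP_feasible_def[folded rank_mass_def]

lemma Pprob_nonneg: "0 \<le> Pprob n t s k"
  unfolding Pprob_def by (intro divide_nonneg_nonneg sum_nonneg) auto

lemma Pprob_mono: "k \<le> k' \<Longrightarrow> Pprob n t s k \<le> Pprob n t s k'"
  unfolding Pprob_def by (intro divide_right_mono sum_mono2) auto

lemma LP_feasible_nonneg:
  "LP_feasible n p q x \<gamma> \<Longrightarrow> t \<in> {1..n} \<Longrightarrow> s \<in> {1..t} \<Longrightarrow> 0 \<le> x t s"
  unfolding LP_feasible_def by blast

lemma LP_feasible_le_one:
  assumes feas: "LP_feasible n p q x \<gamma>" and "0 \<le> p" "t \<in> {1..n}" "s \<in> {1..t}"
  shows "x t s \<le> 1"
proof -
  let ?S = "\<Sum>\<tau> = 1..t - 1. \<Sum>\<sigma> = 1..\<tau>. x \<tau> \<sigma>"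
  have "0 \<le> ?S"
    using assms by (intro sum_nonneg) (auto intro: LP_feasible_nonneg)
  then have "1 - p * ?S \<le> 1"
    using \<open>0 \<le> p\<close> by simp
  have "x t s \<le> (1 / real t) * (1 - p * ?S)"
    using feas assms(3,4) unfolding LP_feasible_def by blast
  also have "\<dots> \<le> 1 / real t"
    using \<open>1 - p * ?S \<le> 1\<close> by (simp add: divide_right_mono)
  also have "\<dots> \<le> 1"
    using assms by simp
  finally show ?thesis .
qed

lemma rank_mass_nonneg: "LP_feasible n p q x \<gamma> \<Longrightarrow> 0 \<le> rank_mass n x k"
  unfolding rank_mass_def
  by (intro sum_nonneg mult_nonneg_nonneg Pprob_nonneg) (auto intro: LP_feasible_nonneg)

lemma rank_mass_mono:
  "LP_feasible n p q x \<gamma> \<Longrightarrow> k \<le> k' \<Longrightarrow> rank_mass n x k \<le> rank_mass n x k'"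
  unfolding rank_mass_def
  by (intro sum_mono mult_left_mono Pprob_mono) (auto intro: LP_feasible_nonneg)

lemma one_minus_power_bounds:
  fixes p :: real
  assumes "0 < p" "p \<le> 1" "1 \<le> k"
  shows "0 < 1 - (1 - p) ^ k" "1 - (1 - p) ^ k \<le> 1"
  using assms power_less_one_iff[of "1 - p" k] by auto

lemma LP_values_bdd_above:
  fixes p :: real
  assumes "0 < p" "p \<le> 1" "1 \<le> q"
  shows "bdd_above {\<gamma>. \<exists>x. LP_feasible n p q x \<gamma>}"
proof (rule bdd_aboveI)
  fix \<gamma> assume "\<gamma> \<in> {\<gamma>. \<exists>x. LP_feasible n p q x \<gamma>}"
  then obtain x where feas: "LP_feasible n p q x \<gamma>" by blast
  then have "\<gamma> \<le> p / (1 - (1 - p) ^ 1) * rank_mass n x 1"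
    using assms unfolding LP_feasible_rank_mass by (meson atLeastAtMost_iff order_refl)
  also have "\<dots> = (\<Sum>t = 1..n. \<Sum>s = 1..t. x t s * Pprob n t s 1)"
    using assms by (simp add: rank_mass_def)
  also have "\<dots> \<le> (\<Sum>t = 1..n. \<Sum>s = 1..t. 1 * Pprob n t s 1)"
    using feas assms
    by (intro sum_mono mult_right_mono Pprob_nonneg) (auto intro: LP_feasible_le_one)
  finally show "\<gamma> \<le> (\<Sum>t = 1..n. \<Sum>s = 1..t. 1 * Pprob n t s 1)" .
qed

lemma LP_feasible_scaled:
  fixes p :: real
  assumes feas: "LP_feasible n p q x \<gamma>" and p: "0 < p" "p \<le> 1" and "1 \<le> q"
  shows "LP_feasible n p m x ((1 - (1 - p) ^ q) * \<gamma>)"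
proof -
  define c where "c = 1 - (1 - p) ^ q"
  have c: "0 < c" "c \<le> 1"
    using one_minus_power_bounds[OF p \<open>1 \<le> q\<close>] by (auto simp: c_def)
  have constraint: "\<gamma> \<le> p / (1 - (1 - p) ^ k) * rank_mass n x k" if "k \<in> {1..q}" for k
    using feas that unfolding LP_feasible_rank_mass by blast
  have "c * \<gamma> \<le> p / (1 - (1 - p) ^ k) * rank_mass n x k" if k: "1 \<le> k" for k
  proof -
    have d: "0 < 1 - (1 - p) ^ k" "1 - (1 - p) ^ k \<le> 1"
      using one_minus_power_bounds[OF p k] by auto
    have rhs_nonneg: "0 \<le> p / (1 - (1 - p) ^ k) * rank_mass n x k"
      using d p rank_mass_nonneg[OF feas] by simp
    show ?thesis
    proof (cases "k \<le> q")
      case True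
      have "c * \<gamma> \<le> max \<gamma> 0"
        using c by (cases "\<gamma> \<le> 0") (auto simp: mult_nonneg_nonpos mult_left_le_one_le)
      moreover have "\<gamma> \<le> p / (1 - (1 - p) ^ k) * rank_mass n x k"
        using constraint True k by simp
      ultimately show ?thesis
        using rhs_nonneg by linarith
    next
      case False
      have "c * \<gamma> \<le> c * (p / c * rank_mass n x q)"
        using constraint[of q] \<open>1 \<le> q\<close> c by (intro mult_left_mono) (auto simp: c_def)
      also have "\<dots> = p * rank_mass n x q"
        using c by simp
      also have "\<dots> \<le> p * rank_mass n x k"
        using rank_mass_mono[OF feas, of q k] False p by (intro mult_left_mono) auto
      also have "\<dots> \<le> p / (1 - (1 - p) ^ k) * rank_mass n x k"
        using d p by (intro mult_right_mono rank_mass_nonneg[OF feas]) (simp add: le_divide_eq)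
      finally show ?thesis .
    qed
  qed
  then show ?thesis
    using feas unfolding LP_feasible_rank_mass c_def by auto
qed

lemma mult_cSup_le_cSup:
  fixes c :: real
  assumes "S \<noteq> {}" "bdd_above T" "0 < c" "\<And>x. x \<in> S \<Longrightarrow> c * x \<in> T"
  shows "c * Sup S \<le> Sup T"
proof -
  have "Sup S \<le> Sup T / c"
  proof (rule cSup_least[OF \<open>S \<noteq> {}\<close>])
    fix x assume "x \<in> S"
    then have "c * x \<le> Sup T"
      using assms by (intro cSup_upper) auto
    then show "x \<le> Sup T / c"
      using assms by (simp add: le_divide_eq mult.commute)
  qed
  then show ?thesis
    using assms by (simp add: le_divide_eq mult.commute)
qed

theorem mainTheorem13:
  fixes n q :: nat and p :: real
  assumes "n \<ge> 1" and "0 < p" and "p \<le> 1" and "1 \<le> q" and "q \<le> n"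
  shows "gamma_opt n p n \<ge> (1 - (1 - p) ^ q) * gamma_opt n p q"
proof -
  have "LP_feasible n p q (\<lambda>_ _. 0) 0"
    unfolding LP_feasible_def by auto
  then have "{\<gamma>. \<exists>x. LP_feasible n p q x \<gamma>} \<noteq> {}"
    by blast
  moreover have "bdd_above {\<gamma>. \<exists>x. LP_feasible n p n x \<gamma>}"
    using LP_values_bdd_above assms by simp
  moreover have "0 < 1 - (1 - p) ^ q"
    using one_minus_power_bounds assms by simp
  moreover have "(1 - (1 - p) ^ q) * \<gamma> \<in> {\<gamma>. \<exists>x. LP_feasible n p n x \<gamma>}"
    if "\<gamma> \<in> {\<gamma>. \<exists>x. LP_feasible n p q x \<gamma>}" for \<gamma>
    using that LP_feasible_scaled assms by blast
  ultimately show ?thesis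
    unfolding gamma_opt_def by (rule mult_cSup_le_cSup)
qed

end
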